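(* Let $\mathcal G$ be a simple hypergraph with vertex set $[n]$. If all coefficients of the formal power series $I(\mathcal G,-x)^{-1}\in\mathbb Q[[x_1,\dots,x_n]]$ are nonnegative, then every edge of $\mathcal G$ has even cardinality.
   Context: A hypergraph $\mathcal G$ on $[n]$ is simple if every edge has at least two elements and no edge properly contains another. $I(\mathcal G,x)=\sum_I\prod_{v\in I}x_v$, summed over all independent subsets $I\subseteq[n]$ (those containing no edge), including $\emptyset$. $I(\mathcal G,-x)$ is obtained by substituting $x_i\mapsto-x_i$ for all $i$; it has constant term $1$, so its inverse exists in $\mathbb Q[[x_1,\dots,x_n]]$. *)

theory Defs
  imports Complex_Main "HOL-Library.Multiset"
begin

definition simple_hypergraph :: "nat \<Rightarrow> nat set set \<Rightarrow> bool" where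
  "simple_hypergraph n E \<longleftrightarrow>
     (\<forall>e\<in>E. e \<subseteq> {1..n} \<and> card e \<ge> 2) \<and>
     (\<forall>e\<in>E. \<forall>e'\<in>E. \<not> e \<subset> e')"

definition independent :: "nat set set \<Rightarrow> nat set \<Rightarrow> bool" where
  "independent E I \<longleftrightarrow> (\<forall>e\<in>E. \<not> e \<subseteq> I)"

text \<open>Formal power series in x_1..x_n over Q: coefficient functions on monomials,
  a monomial being a multiset of variable indices (exponent of x_i = count m i).\<close>

type_synonym mps = "nat multiset \<Rightarrow> rat"

definition monomial_on :: "nat \<Rightarrow> nat multiset \<Rightarrow> bool" where
  "monomial_on n m \<longleftrightarrow> set_mset m \<subseteq> {1..n}"

definition series_on :: "nat \<Rightarrow> mps \<Rightarrow> bool" where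
  "series_on n f \<longleftrightarrow> (\<forall>m. \<not> monomial_on n m \<longrightarrow> f m = 0)"

definition ps_mult :: "mps \<Rightarrow> mps \<Rightarrow> mps" where
  "ps_mult f g m = (\<Sum>a\<in>{a. a \<subseteq># m}. f a * g (m - a))"

definition ps_one :: mps where
  "ps_one m = (if m = {#} then 1 else 0)"

definition indep_poly_neg :: "nat \<Rightarrow> nat set set \<Rightarrow> mps" where
  "indep_poly_neg n E m =
     (if \<exists>I. I \<subseteq> {1..n} \<and> independent E I \<and> m = mset_set I
      then (-1) ^ size m else 0)"

definition is_ps_inverse :: "nat \<Rightarrow> mps \<Rightarrow> mps \<Rightarrow> bool" where
  "is_ps_inverse n f S \<longleftrightarrow> series_on n S \<and>
     (\<forall>m. monomial_on n m \<longrightarrow> ps_mult f S m = ps_one m)"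

end

theory Submission imports Defs begin

text \<open>Let \<open>e\<close> be an edge of size \<open>k\<close>. Since \<open>\<G>\<close> is simple, the independent sets inside \<open>e\<close> are
  exactly its proper subsets, so comparing coefficients of monomials supported in \<open>e\<close> in
  \<open>I(\<G>,-x) \<cdot> S = 1\<close> gives a recurrence for \<open>S\<close> that involves no other edge. Solving it,
  \<open>S\<close> equals \<open>1\<close> on monomials whose support is a proper subset of \<open>e\<close>,
  \<open>S(x\<^sup>e) = 1 + (-1)\<^sup>k\<close> and \<open>S(x\<^sup>e x\<^sub>i) = 1 + 2(-1)\<^sup>k\<close> for \<open>i \<in> e\<close>.
  For odd \<open>k\<close> the last coefficient is \<open>-1\<close>.\<close>

lemma finite_submultisets: "finite {a. a \<subseteq># m}"
proof (rule finite_subset)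
  show "{a. a \<subseteq># m} \<subseteq> (\<Union>k\<in>{0..size m}. multisets_of_size (set_mset m) k)"
    by (auto simp: multisets_of_size_def dest: mset_subset_eqD size_mset_mono)
qed auto

lemma alternating_sum_Pow:
  assumes "finite B"
  shows "(\<Sum>A\<in>Pow B. (-1::'a::comm_ring_1) ^ card A) = (if B = {} then 1 else 0)"
  using prod_diff_conv_sum[OF assms, of "\<lambda>_. 1::'a" "\<lambda>_. 1"] assms
  by (simp add: power_0_left card_eq_0_iff)

locale indep_poly_inverse =
  fixes n :: nat and E :: "nat set set" and S :: mps
  assumes simple: "simple_hypergraph n E"
    and inverse: "is_ps_inverse n (indep_poly_neg n E) S"
begin

lemma edge_subset: "e \<in> E \<Longrightarrow> e \<subseteq> {1..n}"
  using simple by (simp add: simple_hypergraph_def)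

lemma finite_edge: "e \<in> E \<Longrightarrow> finite e"
  by (rule finite_subset[OF edge_subset]) simp_all

lemma card_edge: "e \<in> E \<Longrightarrow> card e \<ge> 2"
  using simple by (simp add: simple_hypergraph_def)

lemma independent_subset_edge_iff:
  assumes "e \<in> E" "A \<subseteq> e"
  shows "independent E A \<longleftrightarrow> A \<noteq> e"
proof
  show "independent E A \<Longrightarrow> A \<noteq> e"
    using assms(1) by (auto simp: independent_def)
  have "\<not> e' \<subset> e" if "e' \<in> E" for e'
    using simple that assms(1) by (simp add: simple_hypergraph_def)
  then show "A \<noteq> e \<Longrightarrow> independent E A"
    using assms(2) by (auto simp: independent_def)
qed

lemma indep_poly_neg_mset_set:
  assumes e: "e \<in> E" and A: "A \<subseteq> e"
  shows "indep_poly_neg n E (mset_set A) = (if A = e then 0 else (-1) ^ card A)"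
proof -
  have "finite A"
    using A finite_edge[OF e] by (rule finite_subset)
  have "A \<subseteq> {1..n}"
    using A edge_subset[OF e] by (rule order_trans)
  moreover have "I = A" if "I \<subseteq> {1..n}" "mset_set A = mset_set I" for I
  proof -
    have "finite I"
      using that(1) by (rule finite_subset) simp
    then show "I = A"
      using that(2) \<open>finite A\<close> by (metis finite_set_mset_mset_set)
  qed
  ultimately have "(\<exists>I. I \<subseteq> {1..n} \<and> independent E I \<and> mset_set A = mset_set I) \<longleftrightarrow> A \<noteq> e"
    using independent_subset_edge_iff[OF e A] by blast
  then show ?thesis
    unfolding indep_poly_neg_def using \<open>finite A\<close> by simp
qed

text \<open>Only squarefree monomials \<open>x\<^sup>A\<close> with \<open>A\<close> independent carry a nonzero coefficient of
  \<open>I(\<G>,-x)\<close>; below \<open>m\<close> these are the \<open>A \<subseteq> supp m\<close> other than \<open>e\<close>.\<close>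
lemma inverse_recurrence:
  assumes e: "e \<in> E" and supp: "set_mset m \<subseteq> e"
  shows "(\<Sum>A\<in>Pow (set_mset m) - {e}. (-1) ^ card A * S (m - mset_set A)) = ps_one m"
proof -
  let ?f = "indep_poly_neg n E" and ?P = "Pow (set_mset m) - {e}"
  have "monomial_on n m"
    using supp edge_subset[OF e] by (auto simp: monomial_on_def)
  then have "ps_one m = (\<Sum>a\<in>{a. a \<subseteq># m}. ?f a * S (m - a))"
    using inverse by (simp add: is_ps_inverse_def ps_mult_def)
  also have "\<dots> = (\<Sum>a\<in>mset_set ` Pow (set_mset m). ?f a * S (m - a))"
  proof (rule sum.mono_neutral_right[OF finite_submultisets])
    show "mset_set ` Pow (set_mset m) \<subseteq> {a. a \<subseteq># m}"
      by (auto intro: subset_mset.order_trans[OF subset_imp_msubset_mset_set mset_set_set_mset_msubset])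
    show "\<forall>a\<in>{a. a \<subseteq># m} - mset_set ` Pow (set_mset m). ?f a * S (m - a) = 0"
    proof
      fix a assume a: "a \<in> {a. a \<subseteq># m} - mset_set ` Pow (set_mset m)"
      show "?f a * S (m - a) = 0"
      proof (rule ccontr)
        assume "?f a * S (m - a) \<noteq> 0"
        then obtain I where I: "I \<subseteq> {1..n}" "a = mset_set I"
          by (auto simp: indep_poly_neg_def split: if_splits)
        have "finite I"
          using I(1) by (rule finite_subset) simp
        then have "I \<subseteq> set_mset m"
          using a I(2) set_mset_mono[of a m] by auto
        then show False
          using a I(2) by blast
      qed
    qed
  qed
  also have "\<dots> = (\<Sum>A\<in>Pow (set_mset m). ?f (mset_set A) * S (m - mset_set A))"
  proof (rule sum.reindex_cong[where l = mset_set])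
    show "inj_on mset_set (Pow (set_mset m))"
      by (rule inj_onI) (metis PowD finite_set_mset finite_subset mset_set_eq_iff)
  qed simp_all
  also have "\<dots> = (\<Sum>A\<in>?P. (-1) ^ card A * S (m - mset_set A))"
    using supp e by (intro sum.mono_neutral_cong_right)
      (auto simp: indep_poly_neg_mset_set split: if_splits)
  finally show ?thesis ..
qed

text \<open>Since \<open>\<Sum>A\<in>Pow (supp m). (-1)\<^bsup>|A|\<^esup> = ps_one m\<close>, the constant series \<open>1\<close> satisfies the
  recurrence except at full support, where the excluded term \<open>A = e\<close> is missing.\<close>
lemma inverse_deviation_recurrence:
  assumes e: "e \<in> E" and supp: "set_mset m \<subseteq> e"
  shows "(\<Sum>A\<in>Pow (set_mset m) - {e}. (-1) ^ card A * (S (m - mset_set A) - 1))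
           = (if set_mset m = e then (-1) ^ card e else 0)"
proof -
  have e_ne: "e \<noteq> {}"
    using card_edge[OF e] by auto
  have "(\<Sum>A\<in>Pow (set_mset m) - {e}. (-1::rat) ^ card A)
          = (if set_mset m = e then - ((-1) ^ card e) else ps_one m)"
  proof (cases "set_mset m = e")
    case True
    then show ?thesis
      using alternating_sum_Pow[of e, where 'a = rat] sum.remove[of "Pow e" e "\<lambda>A. (-1::rat) ^ card A"]
        finite_edge[OF e] e_ne by (simp add: eq_neg_iff_add_eq_0 add.commute)
  qed (use alternating_sum_Pow[of "set_mset m"] supp in \<open>auto simp: ps_one_def\<close>)
  moreover have "set_mset m = e \<Longrightarrow> ps_one m = 0"
    using e_ne by (auto simp: ps_one_def)
  ultimately show ?thesis
    using inverse_recurrence[OF assms] by (simp add: algebra_simps sum_subtractf)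
qed

lemma inverse_below_edge:
  assumes e: "e \<in> E"
  shows "set_mset m \<subset> e \<Longrightarrow> S m = 1"
proof (induction "size m" arbitrary: m rule: less_induct)
  case less
  have "(\<Sum>A\<in>Pow (set_mset m) - {e}. (-1) ^ card A * (S (m - mset_set A) - 1))
          = (\<Sum>A\<in>{{}}. (-1) ^ card A * (S (m - mset_set A) - 1))"
  proof (rule sum.mono_neutral_right)
    show "\<forall>A\<in>Pow (set_mset m) - {e} - {{}}. (-1) ^ card A * (S (m - mset_set A) - 1) = 0"
    proof
      fix A assume A: "A \<in> Pow (set_mset m) - {e} - {{}}"
      then have sub: "A \<subseteq> set_mset m"
        by blast
      have "mset_set A \<subseteq># m"
        using subset_imp_msubset_mset_set[OF sub finite_set_mset] mset_set_set_mset_msubset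
        by (rule subset_mset.order_trans)
      moreover have "mset_set A \<noteq> {#}"
        using A finite_subset[OF sub finite_set_mset] by (simp add: mset_set_empty_iff)
      ultimately have size: "size (m - mset_set A) < size m"
        using size_mset_mono[of "mset_set A" m] by (simp add: size_Diff_submset nonempty_has_size)
      have "set_mset (m - mset_set A) \<subseteq> set_mset m"
        by (auto dest: in_diffD)
      then have "set_mset (m - mset_set A) \<subset> e"
        using less.prems by (rule subset_psubset_trans)
      then show "(-1) ^ card A * (S (m - mset_set A) - 1) = 0"
        using less.hyps size by simp
    qed
  qed (use less.prems in auto)
  then show "S m = 1"
    using inverse_deviation_recurrence[OF e psubset_imp_subset[OF less.prems]] less.prems
    by (simp add: psubset_eq)
qed

lemma inverse_at_edge:
  assumes e: "e \<in> E"
  shows "S (mset_set e) = 1 + (-1) ^ card e"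
proof -
  have fin: "finite e"
    using finite_edge[OF e] .
  have "(\<Sum>A\<in>Pow e - {e}. (-1) ^ card A * (S (mset_set e - mset_set A) - 1))
          = (\<Sum>A\<in>{{}}. (-1) ^ card A * (S (mset_set e - mset_set A) - 1))"
  proof (rule sum.mono_neutral_right)
    show "{{}} \<subseteq> Pow e - {e}"
      using card_edge[OF e] by auto
    show "\<forall>A\<in>Pow e - {e} - {{}}. (-1) ^ card A * (S (mset_set e - mset_set A) - 1) = 0"
    proof
      fix A assume A: "A \<in> Pow e - {e} - {{}}"
      then have "mset_set e - mset_set A = mset_set (e - A)"
        using fin by (simp add: mset_set_Diff)
      moreover have "e - A \<subset> e"
        using A by blast
      ultimately show "(-1) ^ card A * (S (mset_set e - mset_set A) - 1) = 0"
        using inverse_below_edge[OF e] fin by simp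
    qed
  qed (simp add: fin)
  then show ?thesis
    using inverse_deviation_recurrence[OF e, of "mset_set e"] fin by simp
qed

lemma inverse_at_edge_plus_vertex:
  assumes e: "e \<in> E" and i: "i \<in> e"
  shows "S (add_mset i (mset_set e)) = 1 + 2 * (-1) ^ card e"
proof -
  let ?m = "add_mset i (mset_set e)"
  have fin: "finite e"
    using finite_edge[OF e] .
  have supp: "set_mset ?m = e"
    using fin i by auto
  have "(\<Sum>A\<in>Pow e - {e}. (-1) ^ card A * (S (?m - mset_set A) - 1))
          = (\<Sum>A\<in>{{}, {i}}. (-1) ^ card A * (S (?m - mset_set A) - 1))"
  proof (rule sum.mono_neutral_right)
    show "{{}, {i}} \<subseteq> Pow e - {e}"
      using card_edge[OF e] i by auto
    show "\<forall>A\<in>Pow e - {e} - {{}, {i}}. (-1) ^ card A * (S (?m - mset_set A) - 1) = 0"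
    proof
      fix A assume A: "A \<in> Pow e - {e} - {{}, {i}}"
      then obtain j where j: "j \<in> A" "j \<noteq> i"
        by blast
      have "j \<notin># ?m - mset_set A"
        using j A fin by (auto simp: count_mset_set' finite_subset simp flip: count_eq_zero_iff)
      then have "set_mset (?m - mset_set A) \<subset> e"
        using supp j A by (auto dest: in_diffD)
      then show "(-1) ^ card A * (S (?m - mset_set A) - 1) = 0"
        using inverse_below_edge[OF e] by simp
    qed
  qed (simp add: fin)
  then show ?thesis
    using inverse_deviation_recurrence[OF e, of ?m] supp inverse_at_edge[OF e] by (simp add: fin i)
qed

end

theorem proposition8p1:
  fixes n :: nat and E :: "nat set set" and S :: "nat multiset \<Rightarrow> rat"
  assumes "simple_hypergraph n E"
    and "is_ps_inverse n (indep_poly_neg n E) S"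
    and "\<forall>m. S m \<ge> 0"
  shows "\<forall>e\<in>E. even (card e)"
proof
  interpret indep_poly_inverse n E S
    using assms(1,2) by unfold_locales
  fix e assume e: "e \<in> E"
  obtain i where i: "i \<in> e"
    using card_edge[OF e] by fastforce
  have "0 \<le> 1 + 2 * (-1::rat) ^ card e"
    using assms(3) inverse_at_edge_plus_vertex[OF e i] by metis
  then show "even (card e)"
    by (rule contrapos_pp) simp
qed

end
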